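(* Let $(U,V)$ be a one-dimensional robot game. (1) If $\max(V)\ge -\min(U)$, then every positive counter value is losing. Similarly, if $\min(V)\le -\max(U)$, then every negative counter value is losing. (2) If $\max(U)>-\min(V)$ and there exists a bound $B\in\mathbb{Z}$ such that every counter value greater than $B$ is winning, then every counter value is winning. Similarly, if $\min(U)<-\max(V)$ and there exists a bound $B$ such that every counter value less than $B$ is winning, then every counter value is winning.
   Context: A robot game in dimension one is a pair $(U,V)$ of finite nonempty subsets of $\mathbb{Z}$; $U$ belongs to the reacher and $V$ to the opponent. From an initial counter value $x_0\in\mathbb{Z}$, a play proceeds in rounds: in a round starting at counter value $x$, the opponent chooses $v\in V$ and the counter becomes $x+v$, then the reacher chooses $u\in U$ and the counter becomes $x+v+u$, where the round ends. The reacher wins the play if some round ends at $0$; by convention the reacher wins immediately if the play starts at $0$. Strategies are functions from play prefixes to moves. A counter value $x$ is winning if the reacher has a strategy such that against every opponent strategy the play from $x$ is won by the reacher; it is losing if the opponent has a strategy such that against every reacher strategy the play from $x$ is not won by the reacher. "Positive" and "negative" mean strictly positive and strictly negative. *)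

theory Defs
  imports Main
begin

text \<open>A play prefix is the list of counter values visited so far (starting with the
initial value, then alternating: after the opponent's move, after the reacher's move).\<close>

fun hist :: "(int list \<Rightarrow> int) \<Rightarrow> (int list \<Rightarrow> int) \<Rightarrow> int \<Rightarrow> nat \<Rightarrow> int list" where
  "hist opp reach x0 0 = [x0]"
| "hist opp reach x0 (Suc n) =
     (let h = hist opp reach x0 n;
          y = last h + opp h;
          h' = h @ [y]
      in h' @ [y + reach h'])"

definition reacher_wins :: "(int list \<Rightarrow> int) \<Rightarrow> (int list \<Rightarrow> int) \<Rightarrow> int \<Rightarrow> bool" where
  "reacher_wins opp reach x0 \<longleftrightarrow> (\<exists>n. last (hist opp reach x0 n) = 0)"

definition strategy_in :: "int set \<Rightarrow> (int list \<Rightarrow> int) \<Rightarrow> bool" where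
  "strategy_in M s \<longleftrightarrow> (\<forall>h. s h \<in> M)"

definition winning :: "int set \<Rightarrow> int set \<Rightarrow> int \<Rightarrow> bool" where
  "winning U V x \<longleftrightarrow>
     (\<exists>reach. strategy_in U reach \<and>
        (\<forall>opp. strategy_in V opp \<longrightarrow> reacher_wins opp reach x))"

definition losing :: "int set \<Rightarrow> int set \<Rightarrow> int \<Rightarrow> bool" where
  "losing U V x \<longleftrightarrow>
     (\<exists>opp. strategy_in V opp \<and>
        (\<forall>reach. strategy_in U reach \<longrightarrow> \<not> reacher_wins opp reach x))"

end

theory Submission
  imports Defs
begin

text \<open>If the opponent can always play some v with v + u \<ge> 0 for every u \<in> U, the counter never
decreases, so from a positive value it never reaches 0. Conversely, if the reacher has a move u
with v + u \<ge> 1 for every v \<in> V, repeating u pushes the counter above any bound B; once it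
exceeds B the reacher switches to a winning strategy for the current value, and the rest of the
play is a play from that value against the opponent with the past prepended. The statements for
negative values follow by negating all moves and counter values.\<close>

abbreviation counter :: "(int list \<Rightarrow> int) \<Rightarrow> (int list \<Rightarrow> int) \<Rightarrow> int \<Rightarrow> nat \<Rightarrow> int" where
  "counter opp reach x n \<equiv> last (hist opp reach x n)"

lemma counter_Suc:
  "counter opp reach x (Suc n) =
     counter opp reach x n + opp (hist opp reach x n)
       + reach (hist opp reach x n @ [counter opp reach x n + opp (hist opp reach x n)])"
  by (simp add: Let_def)

lemma length_hist: "length (hist opp reach x n) = 2 * n + 1"
  by (induction n) (simp_all add: Let_def)

lemma hist_not_Nil: "hist opp reach x n \<noteq> []"
  using length_hist[of opp reach x n] by auto

lemma hd_hist: "hd (hist opp reach x n) = x"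
  by (induction n) (simp_all add: Let_def hist_not_Nil)

lemma take_hist: "k \<le> n \<Longrightarrow> take (2 * k + 1) (hist opp reach x n) = hist opp reach x k"
proof (induction n)
  case (Suc n)
  show ?case
  proof (cases "k = Suc n")
    case False
    with Suc.prems have "k \<le> n" by simp
    then show ?thesis
      using Suc.IH length_hist[of opp reach x n] by (simp add: Let_def)
  qed (simp add: length_hist del: hist.simps(2))
qed (simp add: length_hist)

lemma nth_hist: "k \<le> n \<Longrightarrow> hist opp reach x n ! (2 * k) = counter opp reach x k"
proof -
  assume "k \<le> n"
  then have "hist opp reach x n ! (2 * k) = hist opp reach x k ! (2 * k)"
    by (metis take_hist nth_take lessI add.commute plus_1_eq_Suc)
  then show ?thesis
    using length_hist[of opp reach x k] hist_not_Nil[of opp reach x k] by (simp add: last_conv_nth)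
qed

lemma hist_add_shift:
  fixes opp reach x m
  defines "P \<equiv> butlast (hist opp reach x m)"
  assumes agree: "\<And>h. h \<noteq> [] \<Longrightarrow> hd h = counter opp reach x m \<Longrightarrow> reach (P @ h) = \<sigma> h"
  shows "hist opp reach x (m + n) = P @ hist (\<lambda>h. opp (P @ h)) \<sigma> (counter opp reach x m) n"
proof (induction n)
  case 0
  show ?case by (simp add: P_def hist_not_Nil)
next
  case (Suc n)
  let ?h = "hist (\<lambda>h. opp (P @ h)) \<sigma> (counter opp reach x m) n"
  let ?y = "last ?h + opp (P @ ?h)"
  have "reach (P @ ?h @ [?y]) = \<sigma> (?h @ [?y])"
    using agree hist_not_Nil[of "\<lambda>h. opp (P @ h)" \<sigma>] by (simp add: hd_hist)
  then show ?case
    using Suc.IH hist_not_Nil[of "\<lambda>h. opp (P @ h)" \<sigma>] by (simp add: Let_def)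
qed

definition mirror_strategy :: "(int list \<Rightarrow> int) \<Rightarrow> int list \<Rightarrow> int" where
  "mirror_strategy s h = - s (map uminus h)"

lemma mirror_strategy_mirror_strategy [simp]: "mirror_strategy (mirror_strategy s) = s"
  by (rule ext) (simp add: mirror_strategy_def comp_def)

lemma strategy_in_mirror_strategy_iff:
  "strategy_in (uminus ` M) (mirror_strategy s) \<longleftrightarrow> strategy_in M s"
  unfolding strategy_in_def mirror_strategy_def
  by (metis (no_types, lifting) image_iff list.map_comp map_idI comp_def minus_minus)

lemma hist_mirror_strategy:
  "hist (mirror_strategy opp) (mirror_strategy reach) (- x) n = map uminus (hist opp reach x n)"
  by (induction n) (simp_all add: Let_def mirror_strategy_def last_map hist_not_Nil comp_def add.commute)

lemma reacher_wins_mirror_strategy_iff: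
  "reacher_wins (mirror_strategy opp) (mirror_strategy reach) (- x) \<longleftrightarrow> reacher_wins opp reach x"
  by (simp add: reacher_wins_def hist_mirror_strategy last_map hist_not_Nil)

lemma ex_mirror_strategy: "(\<exists>s. P s) \<longleftrightarrow> (\<exists>s. P (mirror_strategy s))"
  by (metis mirror_strategy_mirror_strategy)

lemma all_mirror_strategy: "(\<forall>s. P s) \<longleftrightarrow> (\<forall>s. P (mirror_strategy s))"
  by (metis mirror_strategy_mirror_strategy)

lemma winning_uminus_iff: "winning (uminus ` U) (uminus ` V) (- x) \<longleftrightarrow> winning U V x"
  unfolding winning_def
  by (subst ex_mirror_strategy, subst all_mirror_strategy)
    (simp add: strategy_in_mirror_strategy_iff reacher_wins_mirror_strategy_iff)

lemma losing_uminus_iff: "losing (uminus ` U) (uminus ` V) (- x) \<longleftrightarrow> losing U V x"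
  unfolding losing_def
  by (subst ex_mirror_strategy, subst all_mirror_strategy)
    (simp add: strategy_in_mirror_strategy_iff reacher_wins_mirror_strategy_iff)

lemma losing_if_nondecreasing:
  assumes "v \<in> V" and "\<And>u. u \<in> U \<Longrightarrow> v + u \<ge> 0" and "x > 0"
  shows "losing U V x"
proof -
  have "\<not> reacher_wins (\<lambda>_. v) reach x" if reach: "strategy_in U reach" for reach
  proof -
    have "counter (\<lambda>_. v) reach x n \<ge> x" for n
    proof (induction n)
      case (Suc n)
      have "v + reach h \<ge> 0" for h
        using reach assms(2) unfolding strategy_in_def by blast
      with Suc.IH show ?case
        by (simp only: counter_Suc) (metis add.assoc add_increasing2)
    qed simp
    with \<open>x > 0\<close> show ?thesis unfolding reacher_wins_def by (metis not_le order.refl)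
  qed
  moreover have "strategy_in V (\<lambda>_. v)"
    using \<open>v \<in> V\<close> by (simp add: strategy_in_def)
  ultimately show ?thesis unfolding losing_def by blast
qed

lemma losing_if_nonincreasing:
  assumes "v \<in> V" and "\<And>u. u \<in> U \<Longrightarrow> v + u \<le> 0" and "x < 0"
  shows "losing U V x"
proof -
  have "losing (uminus ` U) (uminus ` V) (- x)"
  proof (rule losing_if_nondecreasing[of "- v"])
    show "- v + u \<ge> 0" if "u \<in> uminus ` U" for u
      using that assms(2) by fastforce
  qed (use assms in auto)
  then show ?thesis by (simp add: losing_uminus_iff)
qed

text \<open>The entries at even positions of a history are the counter values at the start of the
rounds: the strategy plays u until one of them exceeds B and then follows \<sigma> y from the first such
value y on.\<close>

definition switch_strategy :: "int \<Rightarrow> int \<Rightarrow> (int \<Rightarrow> int list \<Rightarrow> int) \<Rightarrow> int list \<Rightarrow> int" where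
  "switch_strategy B u \<sigma> h =
     (if \<exists>k. 2 * k < length h \<and> h ! (2 * k) > B
      then let k = LEAST k. 2 * k < length h \<and> h ! (2 * k) > B in \<sigma> (h ! (2 * k)) (drop (2 * k) h)
      else u)"

lemma strategy_in_switch_strategy:
  assumes "u \<in> U" and "\<And>y. y > B \<Longrightarrow> strategy_in U (\<sigma> y)"
  shows "strategy_in U (switch_strategy B u \<sigma>)"
  unfolding strategy_in_def
proof
  fix h
  show "switch_strategy B u \<sigma> h \<in> U"
  proof (cases "\<exists>k. 2 * k < length h \<and> h ! (2 * k) > B")
    case True
    let ?k = "LEAST k. 2 * k < length h \<and> h ! (2 * k) > B"
    have "h ! (2 * ?k) > B" using LeastI_ex[OF True] by blast
    with True assms(2) show ?thesis
      by (simp add: switch_strategy_def Let_def strategy_in_def)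
  next
    case False
    then have "switch_strategy B u \<sigma> h = u"
      unfolding switch_strategy_def by (rule if_not_P)
    with \<open>u \<in> U\<close> show ?thesis by simp
  qed
qed

lemma switch_strategy_before_switch:
  assumes "\<And>k. k \<le> n \<Longrightarrow> counter opp reach x k \<le> B"
  shows "switch_strategy B u \<sigma> (hist opp reach x n @ [y]) = u"
proof -
  have "\<not> (\<exists>k. 2 * k < length (hist opp reach x n @ [y]) \<and> (hist opp reach x n @ [y]) ! (2 * k) > B)"
  proof
    assume "\<exists>k. 2 * k < length (hist opp reach x n @ [y]) \<and> (hist opp reach x n @ [y]) ! (2 * k) > B"
    then obtain k where k: "2 * k < length (hist opp reach x n @ [y])" "(hist opp reach x n @ [y]) ! (2 * k) > B"
      by blast
    then have "k \<le> n" by (simp add: length_hist)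
    with k assms[of k] show False by (simp add: length_hist nth_append nth_hist)
  qed
  then show ?thesis unfolding switch_strategy_def by (rule if_not_P)
qed

lemma switch_strategy_after_switch:
  assumes below: "\<And>k. k < m \<Longrightarrow> counter opp reach x k \<le> B"
    and above: "counter opp reach x m > B"
    and "h \<noteq> []" and "hd h = counter opp reach x m"
  shows "switch_strategy B u \<sigma> (butlast (hist opp reach x m) @ h) = \<sigma> (counter opp reach x m) h"
proof -
  let ?P = "butlast (hist opp reach x m)" and ?R = "counter opp reach x"
  have len: "length ?P = 2 * m" by (simp add: length_hist)
  have at_m: "(?P @ h) ! (2 * m) = ?R m"
    using len \<open>h \<noteq> []\<close> \<open>hd h = ?R m\<close> by (simp add: nth_append hd_conv_nth)
  have before_m: "(?P @ h) ! (2 * k) = ?R k" if "k < m" for k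
    using that len by (simp add: nth_append nth_butlast length_hist nth_hist)
  have first: "2 * m < length (?P @ h) \<and> (?P @ h) ! (2 * m) > B"
    using len \<open>h \<noteq> []\<close> at_m above by simp
  have "(LEAST k. 2 * k < length (?P @ h) \<and> (?P @ h) ! (2 * k) > B) = m"
  proof (rule Least_equality)
    fix k assume "2 * k < length (?P @ h) \<and> (?P @ h) ! (2 * k) > B"
    then show "m \<le> k" using before_m[of k] below[of k] by (metis not_le)
  qed (rule first)
  moreover have "\<exists>k. 2 * k < length (?P @ h) \<and> (?P @ h) ! (2 * k) > B"
    using first by blast
  ultimately show ?thesis
    using at_m len by (simp add: switch_strategy_def Let_def)
qed

lemma counter_exceeds_under_switch_strategy:
  assumes "strategy_in V opp" and step: "\<And>v. v \<in> V \<Longrightarrow> v + u \<ge> 1"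
  shows "\<exists>n. counter opp (switch_strategy B u \<sigma>) x n > B"
proof (rule ccontr)
  let ?R = "counter opp (switch_strategy B u \<sigma>) x"
  assume "\<not> ?thesis"
  then have below: "?R n \<le> B" for n by (simp add: not_less)
  have "?R n \<ge> x + int n" for n
  proof (induction n)
    case (Suc n)
    have "opp (hist opp (switch_strategy B u \<sigma>) x n) + u \<ge> 1"
      using assms unfolding strategy_in_def by blast
    with Suc.IH show ?case
      by (simp only: counter_Suc switch_strategy_before_switch below)
  qed simp
  from this[of "nat (B - x + 1)"] below[of "nat (B - x + 1)"] show False by linarith
qed

lemma winning_if_winning_above:
  assumes "u \<in> U" and step: "\<And>v. v \<in> V \<Longrightarrow> v + u \<ge> 1"
    and above: "\<And>y. y > B \<Longrightarrow> winning U V y"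
  shows "winning U V x"
proof -
  obtain \<sigma> where \<sigma>: "\<And>y. y > B \<Longrightarrow>
      strategy_in U (\<sigma> y) \<and> (\<forall>opp. strategy_in V opp \<longrightarrow> reacher_wins opp (\<sigma> y) y)"
    using above unfolding winning_def by metis
  define reach where "reach = switch_strategy B u \<sigma>"
  have "reacher_wins opp reach x" if opp: "strategy_in V opp" for opp
  proof -
    let ?R = "counter opp reach x"
    define m where "m = (LEAST n. ?R n > B)"
    have "?R m > B"
      unfolding m_def reach_def by (rule LeastI_ex) (rule counter_exceeds_under_switch_strategy[OF opp step])
    moreover have "?R k \<le> B" if "k < m" for k
      using not_less_Least[of k "\<lambda>n. ?R n > B"] that unfolding m_def by simp
    ultimately have shift: "hist opp reach x (m + n) =
        butlast (hist opp reach x m) @ hist (\<lambda>h. opp (butlast (hist opp reach x m) @ h)) (\<sigma> (?R m)) (?R m) n"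
      for n
      unfolding reach_def by (intro hist_add_shift) (rule switch_strategy_after_switch)
    have "strategy_in V (\<lambda>h. opp (butlast (hist opp reach x m) @ h))"
      using opp by (simp add: strategy_in_def)
    with \<sigma>[OF \<open>?R m > B\<close>] obtain n
      where "counter (\<lambda>h. opp (butlast (hist opp reach x m) @ h)) (\<sigma> (?R m)) (?R m) n = 0"
      unfolding reacher_wins_def by blast
    then have "?R (m + n) = 0" by (simp add: shift hist_not_Nil)
    then show ?thesis unfolding reacher_wins_def by blast
  qed
  moreover have "strategy_in U reach"
    unfolding reach_def using \<open>u \<in> U\<close> \<sigma> by (blast intro: strategy_in_switch_strategy)
  ultimately show ?thesis unfolding winning_def by blast
qed

lemma winning_if_winning_below:
  assumes "u \<in> U" and "\<And>v. v \<in> V \<Longrightarrow> v + u \<le> -1"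
    and "\<And>y. y < B \<Longrightarrow> winning U V y"
  shows "winning U V x"
proof -
  have "winning (uminus ` U) (uminus ` V) (- x)"
  proof (rule winning_if_winning_above[of "- u" _ _ "- B"])
    fix y :: int assume "y > - B"
    then show "winning (uminus ` U) (uminus ` V) y"
      using assms(3)[of "- y"] winning_uminus_iff[of U V "- y"] by simp
  next
    show "v + - u \<ge> 1" if "v \<in> uminus ` V" for v
      using that assms(2) by fastforce
  qed (use assms in auto)
  then show ?thesis by (simp add: winning_uminus_iff)
qed

theorem proposition2:
  fixes U V :: "int set"
  assumes "finite U" "U \<noteq> {}" "finite V" "V \<noteq> {}"
  shows "(Max V \<ge> - Min U \<longrightarrow> (\<forall>x>0. losing U V x))
       \<and> (Min V \<le> - Max U \<longrightarrow> (\<forall>x<0. losing U V x))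
       \<and> (Max U > - Min V \<and> (\<exists>B. \<forall>x>B. winning U V x) \<longrightarrow> (\<forall>x. winning U V x))
       \<and> (Min U < - Max V \<and> (\<exists>B. \<forall>x<B. winning U V x) \<longrightarrow> (\<forall>x. winning U V x))"
proof (intro conjI impI allI)
  fix x :: int
  have U_bounds: "Min U \<le> u" "u \<le> Max U" if "u \<in> U" for u
    using assms that by simp_all
  have V_bounds: "Min V \<le> v" "v \<le> Max V" if "v \<in> V" for v
    using assms that by simp_all
  have extremes_mem: "Max U \<in> U" "Min U \<in> U" "Max V \<in> V" "Min V \<in> V"
    using assms by simp_all
  show "losing U V x" if "Max V \<ge> - Min U" "x > 0"
    by (rule losing_if_nondecreasing[OF extremes_mem(3) _ that(2)]) (use that U_bounds in force)
  show "losing U V x" if "Min V \<le> - Max U" "x < 0"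
    by (rule losing_if_nonincreasing[OF extremes_mem(4) _ that(2)]) (use that U_bounds in force)
  show "winning U V x" if "Max U > - Min V \<and> (\<exists>B. \<forall>x>B. winning U V x)"
  proof -
    from that obtain B where "\<forall>y>B. winning U V y" by blast
    then show ?thesis
      by - (rule winning_if_winning_above[OF extremes_mem(1)], use that V_bounds in force, blast)
  qed
  show "winning U V x" if "Min U < - Max V \<and> (\<exists>B. \<forall>x<B. winning U V x)"
  proof -
    from that obtain B where "\<forall>y<B. winning U V y" by blast
    then show ?thesis
      by - (rule winning_if_winning_below[OF extremes_mem(2)], use that V_bounds in force, blast)
  qed
qed

end
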